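(* Let $z_0\in T$ and $k\in\{0,1,2,\dots\}\cup\{\infty\}$. Then $U_3(T,z_0,k)$ is a dense $G_\delta$ subset of $C^k(T)$.
   Context: $D=\{|z|<1\}$, $T=\{|z|=1\}$, $D(z_0,r)$ the open disk of center $z_0$ and radius $r$. For $k\in\{0,1,2,\dots\}\cup\{\infty\}$, $C^k(T)$ is the space of $u:T\to\mathbb{C}$ such that $\theta\mapsto u(e^{i\theta})$ is $k$ times continuously differentiable on $\mathbb{R}$, with the topology given by the seminorms $\sup_{\theta\in\mathbb{R}}|\frac{d^l}{d\theta^l}u(e^{i\theta})|$ for all integers $0\le l\le k$. For $z_0\in T$ and $r>0$ put $P(z_0,r)=D(z_0,r)\cap D$. $U_3(T,z_0,k)$ is the set of $u\in C^k(T)$ for which there exist no $r>0$ and no continuous $h:T\cup P(z_0,r)\to\mathbb{C}$ holomorphic on $P(z_0,r)$ with $h=u$ on $D(z_0,r)\cap T$. *)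

theory Defs
  imports "HOL-Analysis.Analysis" "HOL-Library.Extended_Nat"
begin

fun iter_deriv :: "nat \<Rightarrow> (real \<Rightarrow> complex) \<Rightarrow> real \<Rightarrow> complex" where
  "iter_deriv 0 g = g"
| "iter_deriv (Suc l) g = (\<lambda>x. vector_derivative (iter_deriv l g) (at x))"

definition circ_param :: "(complex \<Rightarrow> complex) \<Rightarrow> real \<Rightarrow> complex" where
  "circ_param u = (\<lambda>\<theta>. u (cis \<theta>))"

definition Ck_real :: "enat \<Rightarrow> (real \<Rightarrow> complex) \<Rightarrow> bool" where
  "Ck_real k g \<longleftrightarrow>
     (\<forall>l. enat l < k \<longrightarrow> (\<forall>x. iter_deriv l g differentiable (at x))) \<and>
     (\<forall>l. enat l \<le> k \<longrightarrow> continuous_on UNIV (iter_deriv l g))"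

text \<open>C^k(T): functions on T (represented as functions on C vanishing off T).\<close>
definition Ck_T :: "enat \<Rightarrow> (complex \<Rightarrow> complex) set" where
  "Ck_T k = {u. (\<forall>z. z \<notin> sphere 0 1 \<longrightarrow> u z = 0) \<and> Ck_real k (circ_param u)}"

definition seminorm_T :: "nat \<Rightarrow> (complex \<Rightarrow> complex) \<Rightarrow> real" where
  "seminorm_T l u = (SUP \<theta>. cmod (iter_deriv l (circ_param u) \<theta>))"

definition Ck_topology :: "enat \<Rightarrow> (complex \<Rightarrow> complex) topology" where
  "Ck_topology k = topology_generated_by
     {{v \<in> Ck_T k. seminorm_T l (v - u) < \<epsilon>} | l u \<epsilon>.
        enat l \<le> k \<and> u \<in> Ck_T k \<and> \<epsilon> > 0}"

definition P_set :: "complex \<Rightarrow> real \<Rightarrow> complex set" where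
  "P_set z0 r = ball z0 r \<inter> ball 0 1"

definition U3 :: "complex \<Rightarrow> enat \<Rightarrow> (complex \<Rightarrow> complex) set" where
  "U3 z0 k = {u \<in> Ck_T k. \<not> (\<exists>r>0. \<exists>h.
       continuous_on (sphere 0 1 \<union> P_set z0 r) h \<and> h holomorphic_on P_set z0 r \<and>
       (\<forall>z \<in> ball z0 r \<inter> sphere 0 1. h z = u z))}"

end

theory Submission
  imports Defs "HOL-Complex_Analysis.Complex_Analysis" "HOL-Library.Periodic_Fun"
    "HOL-Real_Asymp.Real_Asymp"
begin

text \<open>
  Density. Let \<open>f\<close> be the smooth function on \<open>T\<close> that equals \<open>exp (-1 / sin \<theta>)\<close> on the
  half-circle counter-clockwise from \<open>z0 = e^{i\<alpha>}\<close> (with \<open>\<theta>\<close> measured from \<open>\<alpha>\<close>) and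
  \<open>0\<close> on the other half. A holomorphic extension of \<open>f\<close> near \<open>z0\<close> would vanish on an arc on
  the zero side, hence near that arc, hence on all of \<open>P(z0, r)\<close> by the identity theorem,
  and by continuity also on the positive side: so \<open>f \<in> U3\<close>. Extendable functions form a
  linear space, so for every \<open>u\<close> and \<open>t \<noteq> 0\<close> either \<open>u\<close> or \<open>u + t f\<close> lies in \<open>U3\<close>, and for
  small \<open>t\<close> the latter is close to \<open>u\<close> in every seminorm.

  \<open>G\<^sub>\<delta>\<close>. The complement of \<open>U3\<close> is the union over \<open>n\<close> of the sets of functions having an
  extension to \<open>P(z0, 1/(n+1))\<close> bounded by \<open>n + 1\<close>, and the closure of each of these sets
  still consists of extendable functions: if bounded holomorphic functions on a lens
  \<open>D(c, \<rho>) \<inter> D\<close> converge uniformly on its arc \<open>D(c, \<rho>) \<inter> T\<close>, then they converge uniformly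
  on the smaller lens \<open>D(c, \<rho>\<^sup>2/4) \<inter> D\<close>. This follows from the maximum modulus principle
  applied to \<open>g(z) exp (K (z c\<^sup>* - 1))\<close>, a weight which is small on the inner boundary of the
  lens and not too small near \<open>c\<close>.
\<close>

section \<open>Periodic functions and the seminorms of \<open>C\<^sup>k(T)\<close>\<close>

lemma has_vector_derivative_periodic_shift:
  fixes f :: "real \<Rightarrow> 'a::real_normed_vector"
  assumes "periodic_fun_simple f p"
    and "(f has_vector_derivative D) (at (x + p))"
  shows "(f has_vector_derivative D) (at x)"
proof -
  have "((\<lambda>y. y + p) has_vector_derivative 1) (at x)"
    by (auto intro!: derivative_eq_intros)
  from vector_diff_chain_at[OF this, of f D] assms(2)
  have "((f \<circ> (\<lambda>y. y + p)) has_vector_derivative D) (at x)" by simp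
  moreover have "f \<circ> (\<lambda>y. y + p) = f"
    using periodic_fun_simple.plus_period[OF assms(1)] by auto
  ultimately show ?thesis by simp
qed

lemma vector_derivative_periodic:
  fixes f :: "real \<Rightarrow> 'a::real_normed_vector"
  assumes "periodic_fun_simple f p"
  shows "periodic_fun_simple (\<lambda>x. vector_derivative f (at x)) p"
proof
  fix x :: real
  interpret periodic_fun_simple f p by fact
  have "periodic_fun_simple f (- p)"
    by unfold_locales (use minus_1 in simp)
  then have "(f has_vector_derivative D) (at (x + p)) \<longleftrightarrow> (f has_vector_derivative D) (at x)" for D
    using has_vector_derivative_periodic_shift[OF assms, where x = x]
      has_vector_derivative_periodic_shift[where p = "- p" and x = "x + p"] by auto
  then show "vector_derivative f (at (x + p)) = vector_derivative f (at x)"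
    by (simp add: vector_derivative_def)
qed

lemma iter_deriv_periodic:
  "periodic_fun_simple g p \<Longrightarrow> periodic_fun_simple (iter_deriv l g) p"
  by (induction l) (simp_all add: vector_derivative_periodic)

lemma periodic_continuous_bounded:
  fixes g :: "real \<Rightarrow> 'a::real_normed_vector"
  assumes "periodic_fun_simple g p" "p > 0" "continuous_on UNIV g"
  shows "bounded (range g)"
proof -
  interpret periodic_fun_simple g p by fact
  have "range g \<subseteq> g ` {0..p}"
  proof
    fix y assume "y \<in> range g"
    then obtain x where x: "y = g x" by blast
    define n where "n = \<lfloor>x / p\<rfloor>"
    have "of_int n \<le> x / p" "x / p < of_int n + 1"
      unfolding n_def by linarith+
    then have "x - of_int n * p \<in> {0..p}"
      using \<open>p > 0\<close> by (auto simp: field_simps)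
    moreover have "g (x - of_int n * p) = g x"
      by (rule minus_of_int)
    ultimately show "y \<in> g ` {0..p}"
      using x by (metis image_eqI)
  qed
  moreover have "compact (g ` {0..p})"
    by (intro compact_continuous_image continuous_on_subset[OF assms(3)]) auto
  ultimately show ?thesis
    using bounded_subset compact_imp_bounded by blast
qed

lemma periodic_circ_param: "periodic_fun_simple (circ_param u) (2 * pi)"
  by unfold_locales (simp add: circ_param_def cis.ctr)

lemma bdd_above_iter_deriv_circ_param:
  assumes "u \<in> Ck_T k" "enat l \<le> k"
  shows "bdd_above (range (\<lambda>\<theta>. cmod (iter_deriv l (circ_param u) \<theta>)))"
proof -
  have "bounded (range (iter_deriv l (circ_param u)))"
    using assms
    by (intro periodic_continuous_bounded[where p = "2 * pi"] iter_deriv_periodic periodic_circ_param)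
       (auto simp: Ck_T_def Ck_real_def)
  then show ?thesis
    by (auto simp: bounded_iff intro: bdd_aboveI2)
qed

lemma iter_deriv_add_scaled:
  assumes g: "Ck_real k g" and h: "Ck_real k h" and "enat l \<le> k"
  shows "iter_deriv l (\<lambda>x. g x + c * h x) = (\<lambda>x. iter_deriv l g x + c * iter_deriv l h x)"
  using \<open>enat l \<le> k\<close>
proof (induction l)
  case (Suc l)
  then have lk: "enat l < k"
    using Suc_ile_eq by blast
  have deriv: "((\<lambda>x. iter_deriv l g x + c * iter_deriv l h x) has_vector_derivative
      iter_deriv (Suc l) g x + c * iter_deriv (Suc l) h x) (at x)" for x
    using g h lk unfolding Ck_real_def
    by (auto intro!: has_vector_derivative_add has_vector_derivative_mult_right
             simp: vector_derivative_works[symmetric])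
  show ?case
    using Suc lk by (simp add: vector_derivative_at[OF deriv])
qed simp

lemma Ck_real_add_scaled:
  assumes "Ck_real k g" "Ck_real k h"
  shows "Ck_real k (\<lambda>x. g x + c * h x)"
  using assms unfolding Ck_real_def
  by (auto simp: iter_deriv_add_scaled[OF assms] intro!: continuous_intros)

lemma Ck_T_add_scaled:
  assumes "u \<in> Ck_T k" "v \<in> Ck_T k"
  shows "(\<lambda>z. u z + c * v z) \<in> Ck_T k"
proof -
  have "circ_param (\<lambda>z. u z + c * v z) = (\<lambda>x. circ_param u x + c * circ_param v x)"
    by (simp add: circ_param_def)
  then show ?thesis
    using assms Ck_real_add_scaled[of k "circ_param u" "circ_param v" c] by (auto simp: Ck_T_def)
qed

lemma Ck_T_diff:
  assumes "u \<in> Ck_T k" "v \<in> Ck_T k"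
  shows "u - v \<in> Ck_T k"
  using Ck_T_add_scaled[OF assms, of "-1"] by (simp add: fun_diff_def)

lemma seminorm_T_upper:
  assumes "u \<in> Ck_T k" "enat l \<le> k"
  shows "cmod (iter_deriv l (circ_param u) \<theta>) \<le> seminorm_T l u"
  unfolding seminorm_T_def by (rule cSUP_upper[OF _ bdd_above_iter_deriv_circ_param[OF assms]]) simp

lemma seminorm_T_least:
  "(\<And>\<theta>. cmod (iter_deriv l (circ_param u) \<theta>) \<le> M) \<Longrightarrow> seminorm_T l u \<le> M"
  unfolding seminorm_T_def by (rule cSUP_least) auto

lemma seminorm_T_zero [simp]: "seminorm_T l (\<lambda>z. 0) = 0"
proof -
  have "iter_deriv l (\<lambda>x. 0) = (\<lambda>x. 0)"
    by (induction l) auto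
  then show ?thesis
    by (simp add: seminorm_T_def circ_param_def)
qed

lemma seminorm_T_add_scaled_le:
  assumes "u \<in> Ck_T k" "v \<in> Ck_T k" "enat l \<le> k"
  shows "seminorm_T l (\<lambda>z. u z + c * v z) \<le> seminorm_T l u + cmod c * seminorm_T l v"
proof (rule seminorm_T_least)
  fix \<theta>
  have "circ_param (\<lambda>z. u z + c * v z) = (\<lambda>x. circ_param u x + c * circ_param v x)"
    by (simp add: circ_param_def)
  then have "iter_deriv l (circ_param (\<lambda>z. u z + c * v z)) \<theta> =
      iter_deriv l (circ_param u) \<theta> + c * iter_deriv l (circ_param v) \<theta>"
    using assms iter_deriv_add_scaled[of k "circ_param u" "circ_param v" l c]
    by (simp add: Ck_T_def)
  also have "cmod \<dots> \<le> seminorm_T l u + cmod c * seminorm_T l v"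
    using seminorm_T_upper[OF assms(1,3)] seminorm_T_upper[OF assms(2,3)]
    by (intro order_trans[OF norm_triangle_ineq] add_mono) (auto simp: norm_mult mult_left_mono)
  finally show "cmod (iter_deriv l (circ_param (\<lambda>z. u z + c * v z)) \<theta>) \<le> \<dots>" .
qed

lemma seminorm_T_triangle:
  assumes "u \<in> Ck_T k" "v \<in> Ck_T k" "w \<in> Ck_T k" "enat l \<le> k"
  shows "seminorm_T l (u - w) \<le> seminorm_T l (u - v) + seminorm_T l (v - w)"
  using seminorm_T_add_scaled_le[OF Ck_T_diff[OF assms(1,2)] Ck_T_diff[OF assms(2,3)] assms(4), of 1]
  by (simp add: fun_diff_def)

lemma seminorm_T_scaled_le:
  assumes "u \<in> Ck_T k" "enat l \<le> k"
  shows "seminorm_T l (\<lambda>z. c * u z) \<le> cmod c * seminorm_T l u"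
proof -
  have "(\<lambda>z. 0) \<in> Ck_T k"
    using Ck_T_diff[OF assms(1,1)] by (simp add: fun_diff_def)
  then show ?thesis
    using seminorm_T_add_scaled_le[OF _ assms, of "\<lambda>z. 0" c] by simp
qed

section \<open>The topology of \<open>C\<^sup>k(T)\<close>\<close>

lemma topspace_Ck_topology: "topspace (Ck_topology k) = Ck_T k"
proof -
  let ?basis = "{{v \<in> Ck_T k. seminorm_T l (v - u) < \<epsilon>} | l u \<epsilon>.
    enat l \<le> k \<and> u \<in> Ck_T k \<and> \<epsilon> > 0}"
  have "u \<in> \<Union>?basis" if "u \<in> Ck_T k" for u
  proof (rule UnionI)
    show "u \<in> {v \<in> Ck_T k. seminorm_T 0 (v - u) < 1}"
      using that by (simp add: fun_diff_def)
    show "{v \<in> Ck_T k. seminorm_T 0 (v - u) < 1} \<in> ?basis"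
      using that by (intro CollectI exI[of _ 0] exI[of _ u] exI[of _ "1::real"])
        (simp add: zero_enat_def[symmetric])
  qed
  then show ?thesis
    unfolding Ck_topology_def topology_generated_by_topspace by blast
qed

lemma openin_Ck_seminorm_ball:
  assumes "enat l \<le> k" "u \<in> Ck_T k" "\<epsilon> > 0"
  shows "openin (Ck_topology k) {v \<in> Ck_T k. seminorm_T l (v - u) < \<epsilon>}"
  unfolding Ck_topology_def by (rule topology_generated_by_Basis) (use assms in blast)

lemma Ck_topology_neighbourhood:
  assumes "openin (Ck_topology k) W" "u \<in> W"
  obtains L \<epsilon> where "\<epsilon> > 0"
    "\<And>v. v \<in> Ck_T k \<Longrightarrow> (\<And>l. l \<le> L \<Longrightarrow> enat l \<le> k \<Longrightarrow> seminorm_T l (v - u) < \<epsilon>) \<Longrightarrow> v \<in> W"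
proof -
  have "generate_topology_on {{v \<in> Ck_T k. seminorm_T l (v - u) < \<epsilon>} | l u \<epsilon>.
      enat l \<le> k \<and> u \<in> Ck_T k \<and> \<epsilon> > 0} W"
    using assms(1) unfolding Ck_topology_def by (rule openin_topology_generated_by)
  then have "\<exists>L \<epsilon>. \<epsilon> > 0 \<and>
      (\<forall>v\<in>Ck_T k. (\<forall>l\<le>L. enat l \<le> k \<longrightarrow> seminorm_T l (v - u) < \<epsilon>) \<longrightarrow> v \<in> W)"
    using assms(2)
  proof (induction arbitrary: u)
    case (Int a b)
    obtain L1 e1 where "e1 > 0"
      and a: "\<forall>v\<in>Ck_T k. (\<forall>l\<le>L1. enat l \<le> k \<longrightarrow> seminorm_T l (v - u) < e1) \<longrightarrow> v \<in> a"
      using Int.IH(1) Int.prems by blast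
    obtain L2 e2 where "e2 > 0"
      and b: "\<forall>v\<in>Ck_T k. (\<forall>l\<le>L2. enat l \<le> k \<longrightarrow> seminorm_T l (v - u) < e2) \<longrightarrow> v \<in> b"
      using Int.IH(2) Int.prems by blast
    show ?case
    proof (intro exI[of _ "max L1 L2"] exI[of _ "min e1 e2"] conjI ballI impI)
      fix v assume "v \<in> Ck_T k"
        and "\<forall>l\<le>max L1 L2. enat l \<le> k \<longrightarrow> seminorm_T l (v - u) < min e1 e2"
      with a b show "v \<in> a \<inter> b"
        by fastforce
    qed (use \<open>e1 > 0\<close> \<open>e2 > 0\<close> in simp)
  next
    case (UN K)
    then obtain s where "s \<in> K" "u \<in> s"
      by blast
    with UN.IH[OF this] show ?case
      by blast
  next
    case (Basis s)
    then obtain l0 u0 e0 where s: "s = {v \<in> Ck_T k. seminorm_T l0 (v - u0) < e0}"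
      and l0: "enat l0 \<le> k" and u0: "u0 \<in> Ck_T k"
      by (auto simp only: mem_Collect_eq)
    have u: "u \<in> Ck_T k" "seminorm_T l0 (u - u0) < e0"
      using Basis.prems unfolding s by auto
    show ?case
    proof (intro exI[of _ l0] exI[of _ "e0 - seminorm_T l0 (u - u0)"] conjI ballI impI)
      fix v assume v: "v \<in> Ck_T k"
        and small: "\<forall>l\<le>l0. enat l \<le> k \<longrightarrow> seminorm_T l (v - u) < e0 - seminorm_T l0 (u - u0)"
      have "seminorm_T l0 (v - u0) \<le> seminorm_T l0 (v - u) + seminorm_T l0 (u - u0)"
        by (rule seminorm_T_triangle[OF v u(1) u0 l0])
      also have "\<dots> < e0"
        using small l0 by auto
      finally show "v \<in> s"
        using s v by simp
    qed (use u in simp)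
  qed simp
  with that show ?thesis
    by blast
qed

lemma cis_Arg_unit: "cmod z = 1 \<Longrightarrow> cis (Arg z) = z"
  by (subst cis_Arg) (auto simp: sgn_div_norm)

lemma continuous_circ_param_Ck_T:
  assumes "u \<in> Ck_T k"
  shows "continuous_on UNIV (circ_param u)"
  using assms by (auto simp: Ck_T_def Ck_real_def zero_enat_def[symmetric] dest: spec[of _ 0])

lemma norm_diff_le_seminorm_T_0:
  assumes "u \<in> Ck_T k" "v \<in> Ck_T k" "z \<in> sphere 0 1"
  shows "cmod (u z - v z) \<le> seminorm_T 0 (u - v)"
proof -
  have "cmod (iter_deriv 0 (circ_param (u - v)) (Arg z)) \<le> seminorm_T 0 (u - v)"
    using Ck_T_diff[OF assms(1,2)] by (rule seminorm_T_upper) (simp add: zero_enat_def[symmetric])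
  then show ?thesis
    using assms(3) by (simp add: circ_param_def cis_Arg_unit)
qed

lemma continuous_on_sphere_Ck_T:
  assumes "u \<in> Ck_T k"
  shows "continuous_on (sphere 0 1) u"
proof -
  have "sphere 0 1 \<subseteq> cis ` {-pi..pi}"
  proof
    fix z :: complex assume "z \<in> sphere 0 1"
    then have "z = cis (Arg z)" "Arg z \<in> {-pi..pi}"
      using Arg_bounded[of z] cis_Arg_unit[of z] by auto
    then show "z \<in> cis ` {-pi..pi}"
      by blast
  qed
  then have "quotient_map (top_of_set {-pi..pi}) (top_of_set (sphere 0 1)) cis"
    by (intro continuous_imp_quotient_map compact_space_subtopology Hausdorff_space_subtopology)
       (auto simp: continuous_on_cis)
  moreover have "continuous_map (top_of_set {-pi..pi}) euclidean (u \<circ> cis)"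
    using continuous_circ_param_Ck_T[OF assms]
    by (auto simp: circ_param_def o_def intro: continuous_on_subset)
  ultimately have "continuous_map (top_of_set (sphere 0 1)) euclidean u"
    by (rule continuous_compose_quotient_map)
  then show ?thesis
    by simp
qed

section \<open>Holomorphic functions near an arc of the unit circle\<close>

lemma P_set_mono: "r \<le> r' \<Longrightarrow> P_set z0 r \<subseteq> P_set z0 r'"
  unfolding P_set_def by auto

lemma open_P_set: "open (P_set z0 r)"
  unfolding P_set_def by auto

lemma connected_P_set: "connected (P_set z0 r)"
  unfolding P_set_def by (intro convex_connected convex_Int) auto

lemma radial_point_in_P_set:
  assumes "cmod z0 = 1" "0 < e" "e < r" "e \<le> 1"
  shows "z0 * of_real (1 - e) \<in> P_set z0 r"
proof -
  have "z0 - z0 * of_real (1 - e) = z0 * of_real e"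
    by (simp add: algebra_simps)
  then show ?thesis
    using assms by (simp add: P_set_def dist_norm norm_mult del: of_real_diff)
qed

lemma closure_P_set:
  assumes "cmod z0 = 1" "0 < r"
  shows "closure (P_set z0 r) = cball z0 r \<inter> cball 0 1"
proof -
  have "z0 * of_real (1 - min r 1 / 2) \<in> P_set z0 r"
    using assms by (intro radial_point_in_P_set) auto
  then have "rel_interior (ball z0 r) \<inter> rel_interior (ball 0 1) \<noteq> {}"
    by (auto simp: P_set_def rel_interior_open)
  then show ?thesis
    unfolding P_set_def using assms by (subst closure_Int_convex) auto
qed

lemma interior_closure_P_set:
  assumes "cmod z0 = 1" "0 < r"
  shows "interior (closure (P_set z0 r)) = P_set z0 r"
  unfolding closure_P_set[OF assms] by (simp add: P_set_def)

lemma closure_P_set_mono: "r \<le> r' \<Longrightarrow> closure (P_set z0 r) \<subseteq> closure (P_set z0 r')"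
  by (intro closure_mono P_set_mono)

lemma closure_P_set_subset:
  assumes "cmod c = 1" "0 < \<rho>" "cball c \<rho> \<subseteq> ball z0 r"
  shows "closure (P_set c \<rho>) \<subseteq> sphere 0 1 \<union> P_set z0 r"
proof
  fix w assume "w \<in> closure (P_set c \<rho>)"
  then have "w \<in> ball z0 r" "cmod w \<le> 1"
    using assms(3) unfolding closure_P_set[OF assms(1,2)] by auto
  then show "w \<in> sphere 0 1 \<union> P_set z0 r"
    by (auto simp: P_set_def less_le)
qed

lemma mult_cnj_unit: "cmod c = 1 \<Longrightarrow> c * cnj c = 1"
  by (simp add: complex_mult_cnj cmod_def power2_eq_square[symmetric])

lemma Re_mult_cnj_unit_le:
  fixes z c :: complex
  assumes "cmod c = 1" "cmod z \<le> 1"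
  shows "Re (z * cnj c - 1) \<le> - (cmod (z - c))\<^sup>2 / 2"
proof -
  define a where "a = z * cnj c - 1"
  have "a = (z - c) * cnj c"
    unfolding a_def using mult_cnj_unit[OF assms(1)] by (simp add: algebra_simps)
  then have "cmod a = cmod (z - c)"
    using assms(1) by (simp add: norm_mult)
  then have "(Re a)\<^sup>2 + (Im a)\<^sup>2 = (cmod (z - c))\<^sup>2"
    by (metis cmod_power2)
  moreover have "cmod (a + 1) = cmod z"
    unfolding a_def using assms(1) by (simp add: norm_mult)
  then have "(cmod (a + 1))\<^sup>2 \<le> 1"
    using assms(2) by (simp add: power_le_one)
  then have "(Re a + 1)\<^sup>2 + (Im a)\<^sup>2 \<le> 1"
    by (simp add: cmod_power2)
  ultimately show ?thesis
    unfolding a_def[symmetric] by (simp add: power2_eq_square algebra_simps)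
qed

text \<open>
  A Carleman-type weight for the lens \<open>closure (P_set c \<rho>)\<close>: its modulus
  \<open>exp (K * Re (w * cnj c - 1))\<close> is at most \<open>1\<close> on the closed unit disc, at most
  \<open>exp (- K * \<rho>\<^sup>2 / 2)\<close> on the circle \<open>dist c w = \<rho>\<close> inside it, and at least
  \<open>exp (- K * dist c w)\<close> everywhere.
\<close>
definition arc_weight :: "complex \<Rightarrow> real \<Rightarrow> complex \<Rightarrow> complex" where
  "arc_weight c K w = exp (of_real K * (w * cnj c - 1))"

lemma norm_arc_weight_le:
  assumes "cmod c = 1" "cmod w \<le> 1" "0 \<le> K"
  shows "cmod (arc_weight c K w) \<le> exp (- (K * (cmod (w - c))\<^sup>2 / 2))"
proof -
  have "K * Re (w * cnj c - 1) \<le> K * (- (cmod (w - c))\<^sup>2 / 2)"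
    using Re_mult_cnj_unit_le[OF assms(1,2)] assms(3) by (rule mult_left_mono)
  then show ?thesis
    by (simp add: arc_weight_def)
qed

lemma norm_arc_weight_le_1:
  assumes "cmod c = 1" "cmod w \<le> 1" "0 \<le> K"
  shows "cmod (arc_weight c K w) \<le> 1"
proof -
  have "exp (- (K * (cmod (w - c))\<^sup>2 / 2)) \<le> 1"
    using assms(3) by simp
  then show ?thesis
    using norm_arc_weight_le[OF assms] by linarith
qed

lemma norm_arc_weight_ge:
  assumes "cmod c = 1" "0 \<le> K"
  shows "exp (- (K * dist c w)) \<le> cmod (arc_weight c K w)"
proof -
  have "w * cnj c - 1 = (w - c) * cnj c"
    using mult_cnj_unit[OF assms(1)] by (simp add: algebra_simps)
  then have "- Re (w * cnj c - 1) \<le> dist c w"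
    using abs_Re_le_cmod[of "w * cnj c - 1"] assms(1)
    by (simp add: norm_mult dist_norm norm_minus_commute)
  then have "- (K * dist c w) \<le> K * Re (w * cnj c - 1)"
    using mult_left_mono[OF _ assms(2)] by (metis minus_le_iff mult_minus_right)
  then show ?thesis
    by (simp add: arc_weight_def)
qed

lemma lens_weighted_max_modulus:
  fixes g :: "complex \<Rightarrow> complex"
  assumes c: "cmod c = 1" and "0 < \<rho>" and "0 \<le> K"
    and cont: "continuous_on (closure (P_set c \<rho>)) g" and hol: "g holomorphic_on P_set c \<rho>"
    and bound: "\<And>w. w \<in> closure (P_set c \<rho>) \<Longrightarrow> cmod (g w) \<le> B"
    and arc: "\<And>w. w \<in> closure (P_set c \<rho>) \<inter> sphere 0 1 \<Longrightarrow> cmod (g w) \<le> \<delta>"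
    and z: "z \<in> closure (P_set c \<rho>)"
  shows "cmod (g z) * cmod (arc_weight c K z) \<le> max \<delta> (B * exp (- (K * \<rho>\<^sup>2 / 2)))"
proof -
  define S where "S = closure (P_set c \<rho>)"
  define G where "G w = g w * arc_weight c K w" for w
  have S: "S = cball c \<rho> \<inter> cball 0 1"
    unfolding S_def by (rule closure_P_set[OF c \<open>0 < \<rho>\<close>])
  have "cmod (G z) \<le> max \<delta> (B * exp (- (K * \<rho>\<^sup>2 / 2)))"
  proof (rule maximum_modulus_frontier[where f = G and S = S])
    show "G holomorphic_on interior S"
      unfolding S_def interior_closure_P_set[OF c \<open>0 < \<rho>\<close>] G_def arc_weight_def
      using hol by (intro holomorphic_intros)
    show "continuous_on (closure S) G"
      unfolding S_def closure_closure G_def arc_weight_def using cont by (intro continuous_intros)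
    show "bounded S"
      unfolding S by (simp add: bounded_Int)
  next
    fix w assume "w \<in> frontier S"
    then have "w \<in> S" "w \<notin> P_set c \<rho>"
      unfolding frontier_def S_def interior_closure_P_set[OF c \<open>0 < \<rho>\<close>] by auto
    have w: "cmod w \<le> 1" "cmod (g w) \<le> B"
      using \<open>w \<in> S\<close> bound unfolding S_def by (auto simp: closure_P_set[OF c \<open>0 < \<rho>\<close>])
    from \<open>w \<in> S\<close> \<open>w \<notin> P_set c \<rho>\<close> consider "cmod w = 1" | "dist c w = \<rho>"
      unfolding S P_set_def by (auto simp: less_le)
    then show "cmod (G w) \<le> max \<delta> (B * exp (- (K * \<rho>\<^sup>2 / 2)))"
    proof cases
      case 1
      then have "cmod (g w) \<le> \<delta>"
        using \<open>w \<in> S\<close> arc unfolding S_def by simp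
      moreover have "cmod (g w) * cmod (arc_weight c K w) \<le> cmod (g w)"
        by (rule mult_right_le_one_le[OF norm_ge_zero norm_ge_zero
            norm_arc_weight_le_1[OF c w(1) \<open>0 \<le> K\<close>]])
      ultimately show ?thesis
        by (simp add: G_def norm_mult)
    next
      case 2
      then have "cmod (arc_weight c K w) \<le> exp (- (K * \<rho>\<^sup>2 / 2))"
        using norm_arc_weight_le[OF c w(1) \<open>0 \<le> K\<close>] by (simp add: dist_norm norm_minus_commute)
      then have "cmod (g w) * cmod (arc_weight c K w) \<le> B * exp (- (K * \<rho>\<^sup>2 / 2))"
        by (rule mult_mono[OF w(2) _ order_trans[OF norm_ge_zero w(2)] norm_ge_zero])
      then show ?thesis
        by (simp add: G_def norm_mult)
    qed
  qed (use z in \<open>simp add: S_def\<close>)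
  then show ?thesis
    by (simp add: G_def norm_mult)
qed

lemma lens_weighted_modulus_bound:
  fixes g :: "complex \<Rightarrow> complex"
  assumes c: "cmod c = 1" and \<rho>: "0 < \<rho>" "\<rho> \<le> 1"
    and cont: "continuous_on (closure (P_set c \<rho>)) g" and hol: "g holomorphic_on P_set c \<rho>"
    and bound: "\<And>w. w \<in> closure (P_set c \<rho>) \<Longrightarrow> cmod (g w) \<le> B"
    and arc: "\<And>w. w \<in> closure (P_set c \<rho>) \<inter> sphere 0 1 \<Longrightarrow> cmod (g w) \<le> \<delta>"
    and "0 \<le> M" and z: "z \<in> closure (P_set c (\<rho>\<^sup>2 / 4))"
  shows "cmod (g z) \<le> max \<delta> (B * exp (- M)) * exp (M / 2)"
proof -
  define K where "K = 2 * M / \<rho>\<^sup>2"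
  have "0 \<le> K"
    unfolding K_def using \<open>0 \<le> M\<close> by simp
  have "\<rho>\<^sup>2 / 4 \<le> \<rho>"
    using \<rho> by (simp add: power2_eq_square mult_left_le)
  then have "z \<in> closure (P_set c \<rho>)"
    using closure_P_set_mono z by blast
  have "cmod (g z) * exp (- (K * dist c z)) \<le> cmod (g z) * cmod (arc_weight c K z)"
    by (rule mult_left_mono[OF norm_arc_weight_ge[OF c \<open>0 \<le> K\<close>] norm_ge_zero])
  also have "\<dots> \<le> max \<delta> (B * exp (- (K * \<rho>\<^sup>2 / 2)))"
    by (rule lens_weighted_max_modulus[OF c \<rho>(1) \<open>0 \<le> K\<close> cont hol bound arc \<open>z \<in> closure (P_set c \<rho>)\<close>])
  also have "K * \<rho>\<^sup>2 / 2 = M"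
    unfolding K_def using \<rho> by simp
  finally have weighted: "cmod (g z) * exp (- (K * dist c z)) \<le> max \<delta> (B * exp (- M))" .
  have "dist c z \<le> \<rho>\<^sup>2 / 4"
    using z c \<rho> by (simp add: closure_P_set)
  then have "K * dist c z \<le> K * (\<rho>\<^sup>2 / 4)"
    using \<open>0 \<le> K\<close> by (rule mult_left_mono)
  also have "\<dots> = M / 2"
    unfolding K_def using \<rho> by simp
  finally have "exp (K * dist c z) \<le> exp (M / 2)"
    by simp
  moreover have "0 \<le> max \<delta> (B * exp (- M))"
    using weighted by (rule order_trans[rotated]) simp
  ultimately have "cmod (g z) * exp (- (K * dist c z)) * exp (K * dist c z) \<le>
      max \<delta> (B * exp (- M)) * exp (M / 2)"
    using weighted by (intro mult_mono) simp_all
  then show ?thesis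
    by (simp add: mult.assoc flip: exp_add)
qed

lemma lens_small_if_arc_small:
  fixes g :: "complex \<Rightarrow> complex"
  assumes c: "cmod c = 1" and \<rho>: "0 < \<rho>" "\<rho> \<le> 1" and "0 < \<epsilon>"
    and cont: "continuous_on (closure (P_set c \<rho>)) g" and hol: "g holomorphic_on P_set c \<rho>"
    and bound: "\<And>w. w \<in> closure (P_set c \<rho>) \<Longrightarrow> cmod (g w) \<le> B"
    and arc: "\<And>w. w \<in> closure (P_set c \<rho>) \<inter> sphere 0 1 \<Longrightarrow>
      cmod (g w) \<le> \<epsilon> * exp (- (max B 0 / \<epsilon>))"
    and z: "z \<in> closure (P_set c (\<rho>\<^sup>2 / 4))"
  shows "cmod (g z) \<le> \<epsilon>"
proof -
  define x where "x = max B 0 / \<epsilon>"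
  have "0 \<le> x"
    unfolding x_def using \<open>0 < \<epsilon>\<close> by simp
  have "x \<le> exp x"
    using exp_ge_add_one_self[of x] by linarith
  then have B: "B * exp (- x) \<le> \<epsilon>"
    unfolding x_def using \<open>0 < \<epsilon>\<close> by (simp add: exp_minus field_simps)
  have "cmod (g z) \<le> max (\<epsilon> * exp (- x)) (B * exp (- (2 * x))) * exp (2 * x / 2)"
    using arc \<open>0 \<le> x\<close> unfolding x_def[symmetric]
    by (intro lens_weighted_modulus_bound[OF c \<rho> cont hol bound _ _ z]) auto
  also have "\<dots> = max \<epsilon> (B * exp (- x))"
    by (simp add: max_mult_distrib_right mult.assoc flip: exp_add)
  also have "\<dots> \<le> \<epsilon>"
    using B by simp
  finally show ?thesis .
qed

lemma holomorphic_vanishing_on_arc: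
  fixes g :: "complex \<Rightarrow> complex"
  assumes c: "cmod c = 1" and \<rho>: "0 < \<rho>" "\<rho> \<le> 1"
    and cont: "continuous_on (closure (P_set c \<rho>)) g" and hol: "g holomorphic_on P_set c \<rho>"
    and arc: "\<And>w. w \<in> closure (P_set c \<rho>) \<inter> sphere 0 1 \<Longrightarrow> g w = 0"
    and z: "z \<in> closure (P_set c (\<rho>\<^sup>2 / 4))"
  shows "g z = 0"
proof -
  have "compact (closure (P_set c \<rho>))"
    unfolding closure_P_set[OF c \<rho>(1)] by (intro compact_Int_closed) auto
  then have "bounded (g ` closure (P_set c \<rho>))"
    using cont by (intro compact_imp_bounded compact_continuous_image)
  then obtain B where B: "\<And>w. w \<in> closure (P_set c \<rho>) \<Longrightarrow> cmod (g w) \<le> B"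
    by (auto simp: bounded_iff)
  have "cmod (g z) \<le> \<epsilon>" if "0 < \<epsilon>" for \<epsilon>
  proof (rule lens_small_if_arc_small[OF c \<rho> that cont hol B _ z])
    fix w assume "w \<in> closure (P_set c \<rho>) \<inter> sphere 0 1"
    then show "cmod (g w) \<le> \<epsilon> * exp (- (max B 0 / \<epsilon>))"
      using arc[of w] that by simp
  qed
  then have "cmod (g z) \<le> 0"
    by (rule field_le_epsilon) simp
  then show ?thesis
    by simp
qed

lemma uniformly_Cauchy_on_lens:
  fixes h :: "nat \<Rightarrow> complex \<Rightarrow> complex"
  assumes c: "cmod c = 1" and \<rho>: "0 < \<rho>" "\<rho> \<le> 1"
    and cont: "\<And>j. continuous_on (closure (P_set c \<rho>)) (h j)"
    and hol: "\<And>j. h j holomorphic_on P_set c \<rho>"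
    and bound: "\<And>j w. w \<in> closure (P_set c \<rho>) \<Longrightarrow> cmod (h j w) \<le> B"
    and lim: "uniform_limit (closure (P_set c \<rho>) \<inter> sphere 0 1) h U sequentially"
  shows "uniformly_Cauchy_on (closure (P_set c (\<rho>\<^sup>2 / 4))) h"
  unfolding uniformly_Cauchy_on_def
proof (intro allI impI)
  fix \<epsilon> :: real assume "0 < \<epsilon>"
  define \<delta> where "\<delta> = \<epsilon> / 2 * exp (- (max (2 * B) 0 / (\<epsilon> / 2)))"
  have "0 < \<delta>"
    unfolding \<delta>_def using \<open>0 < \<epsilon>\<close> by simp
  obtain N where N: "\<And>j w. N \<le> j \<Longrightarrow> w \<in> closure (P_set c \<rho>) \<inter> sphere 0 1 \<Longrightarrow>
      dist (h j w) (U w) < \<delta> / 2"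
    using uniform_limitD[OF lim half_gt_zero[OF \<open>0 < \<delta>\<close>]] unfolding eventually_sequentially by blast
  show "\<exists>N. \<forall>z\<in>closure (P_set c (\<rho>\<^sup>2 / 4)). \<forall>m\<ge>N. \<forall>n\<ge>N. dist (h m z) (h n z) < \<epsilon>"
  proof (intro exI[of _ N] ballI allI impI)
    fix z m n assume z: "z \<in> closure (P_set c (\<rho>\<^sup>2 / 4))" and "N \<le> m" "N \<le> n"
    have "cmod (h m z - h n z) \<le> \<epsilon> / 2"
    proof (rule lens_small_if_arc_small[OF c \<rho> half_gt_zero[OF \<open>0 < \<epsilon>\<close>] _ _ _ _ z])
      show "continuous_on (closure (P_set c \<rho>)) (\<lambda>w. h m w - h n w)"
        using cont by (intro continuous_intros)
      show "(\<lambda>w. h m w - h n w) holomorphic_on P_set c \<rho>"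
        using hol by (intro holomorphic_intros)
      show "cmod (h m w - h n w) \<le> 2 * B" if "w \<in> closure (P_set c \<rho>)" for w
        using norm_triangle_ineq4[of "h m w" "h n w"] bound[OF that, of m] bound[OF that, of n]
        by linarith
      show "cmod (h m w - h n w) \<le> \<epsilon> / 2 * exp (- (max (2 * B) 0 / (\<epsilon> / 2)))"
        if "w \<in> closure (P_set c \<rho>) \<inter> sphere 0 1" for w
        using dist_triangle2[of "h m w" "h n w" "U w"] N[OF \<open>N \<le> m\<close> that] N[OF \<open>N \<le> n\<close> that]
        unfolding \<delta>_def[symmetric] by (simp add: dist_norm)
    qed
    then show "dist (h m z) (h n z) < \<epsilon>"
      using \<open>0 < \<epsilon>\<close> by (simp add: dist_norm)
  qed
qed

lemma uniform_limit_on_arc_extends: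
  fixes h :: "nat \<Rightarrow> complex \<Rightarrow> complex"
  assumes c: "cmod c = 1" and \<rho>: "0 < \<rho>" "\<rho> \<le> 1"
    and cont: "\<And>j. continuous_on (closure (P_set c \<rho>)) (h j)"
    and hol: "\<And>j. h j holomorphic_on P_set c \<rho>"
    and bound: "\<And>j w. w \<in> closure (P_set c \<rho>) \<Longrightarrow> cmod (h j w) \<le> B"
    and lim: "uniform_limit (closure (P_set c \<rho>) \<inter> sphere 0 1) h U sequentially"
  obtains H where "continuous_on (closure (P_set c (\<rho>\<^sup>2 / 4))) H"
    "H holomorphic_on P_set c (\<rho>\<^sup>2 / 4)"
    "\<And>z. z \<in> closure (P_set c (\<rho>\<^sup>2 / 4)) \<inter> sphere 0 1 \<Longrightarrow> H z = U z"
proof -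
  let ?L = "closure (P_set c (\<rho>\<^sup>2 / 4))"
  have "\<rho>\<^sup>2 / 4 \<le> \<rho>"
    using \<rho> by (simp add: power2_eq_square mult_left_le)
  then have L_sub: "?L \<subseteq> closure (P_set c \<rho>)"
    by (rule closure_P_set_mono)
  obtain H where H: "uniform_limit ?L h H sequentially"
    using uniformly_Cauchy_on_lens[OF assms] Cauchy_uniformly_convergent
    unfolding uniformly_convergent_on_def by blast
  show thesis
  proof
    show "continuous_on ?L H"
      using continuous_on_subset[OF cont L_sub] by (intro uniform_limit_theorem[OF _ H]) simp_all
    show "H holomorphic_on P_set c (\<rho>\<^sup>2 / 4)"
    proof (rule holomorphic_uniform_sequence[OF open_P_set])
      show "h j holomorphic_on P_set c (\<rho>\<^sup>2 / 4)" for j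
        using hol P_set_mono[OF \<open>\<rho>\<^sup>2 / 4 \<le> \<rho>\<close>] by (rule holomorphic_on_subset)
      fix z assume "z \<in> P_set c (\<rho>\<^sup>2 / 4)"
      then obtain d where "0 < d" and d: "cball z d \<subseteq> P_set c (\<rho>\<^sup>2 / 4)"
        using open_contains_cball open_P_set by blast
      moreover have "cball z d \<subseteq> ?L"
        using d closure_subset by blast
      ultimately show "\<exists>d>0. cball z d \<subseteq> P_set c (\<rho>\<^sup>2 / 4) \<and> uniform_limit (cball z d) h H sequentially"
        using uniform_limit_on_subset[OF H] by blast
    qed
    fix z assume z: "z \<in> ?L \<inter> sphere 0 1"
    show "H z = U z"
    proof (rule LIMSEQ_unique)
      show "(\<lambda>j. h j z) \<longlonglongrightarrow> H z"
        using z by (intro tendsto_uniform_limitI[OF H]) simp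
      show "(\<lambda>j. h j z) \<longlonglongrightarrow> U z"
        using z L_sub by (intro tendsto_uniform_limitI[OF lim]) auto
    qed
  qed
qed

section \<open>A smooth function that is flat on half of the circle\<close>

text \<open>For \<open>w = cis (- a)\<close> these are \<open>sin (t - a)\<close> and \<open>cos (t - a)\<close>.\<close>

definition shifted_sin :: "complex \<Rightarrow> real \<Rightarrow> real" where
  "shifted_sin w t = Im (cis t * w)"

definition shifted_cos :: "complex \<Rightarrow> real \<Rightarrow> real" where
  "shifted_cos w t = Re (cis t * w)"

text \<open>
  Polynomials in the shifted cosine, sine and inverse sine. Every derivative of
  \<open>exp (- 1 / shifted_sin w t)\<close> is such a polynomial times \<open>exp (- 1 / shifted_sin w t)\<close>.
\<close>

inductive trig_laurent :: "complex \<Rightarrow> (real \<Rightarrow> real) \<Rightarrow> bool" for w where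
  const: "trig_laurent w (\<lambda>t. a)"
| cos: "trig_laurent w (\<lambda>t. shifted_cos w t)"
| sin: "trig_laurent w (\<lambda>t. shifted_sin w t)"
| inverse_sin: "trig_laurent w (\<lambda>t. 1 / shifted_sin w t)"
| add: "trig_laurent w p \<Longrightarrow> trig_laurent w q \<Longrightarrow> trig_laurent w (\<lambda>t. p t + q t)"
| mult: "trig_laurent w p \<Longrightarrow> trig_laurent w q \<Longrightarrow> trig_laurent w (\<lambda>t. p t * q t)"

lemma shifted_sin_has_derivative: "(shifted_sin w has_real_derivative shifted_cos w t) (at t)"
  unfolding shifted_sin_def shifted_cos_def by (auto intro!: derivative_eq_intros simp: algebra_simps)

lemma shifted_cos_has_derivative: "(shifted_cos w has_real_derivative - shifted_sin w t) (at t)"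
  unfolding shifted_sin_def shifted_cos_def by (auto intro!: derivative_eq_intros simp: algebra_simps)

lemma continuous_shifted_sin: "continuous_on UNIV (shifted_sin w)"
  unfolding shifted_sin_def by (intro continuous_intros)

lemma abs_shifted_cos_le: "cmod w = 1 \<Longrightarrow> \<bar>shifted_cos w t\<bar> \<le> 1"
  using abs_Re_le_cmod[of "cis t * w"] by (simp add: shifted_cos_def norm_mult)

lemma abs_shifted_sin_le: "cmod w = 1 \<Longrightarrow> \<bar>shifted_sin w t\<bar> \<le> 1"
  using abs_Im_le_cmod[of "cis t * w"] by (simp add: shifted_sin_def norm_mult)

lemma shifted_sin_add: "shifted_sin w (t + h) = cos h * shifted_sin w t + sin h * shifted_cos w t"
proof -
  have rotate: "cis (t + h) * w = cis h * (cis t * w)"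
    by (simp add: cis_mult add.commute mult.assoc)
  show ?thesis
    unfolding shifted_sin_def shifted_cos_def rotate by simp
qed

lemma trig_laurent_has_derivative:
  assumes "trig_laurent w p"
  obtains q where "trig_laurent w q"
    "\<And>t. shifted_sin w t \<noteq> 0 \<Longrightarrow> (p has_real_derivative q t) (at t)"
  using assms
proof (induction arbitrary: thesis)
  case (const a)
  show ?case
    by (rule const.prems[OF trig_laurent.const[of w 0]]) simp
next
  case cos
  show ?case
    by (rule cos.prems[OF trig_laurent.mult[OF trig_laurent.const[of w "-1"] trig_laurent.sin]])
       (simp only: mult_minus1 shifted_cos_has_derivative)
next
  case sin
  show ?case
    by (rule sin.prems[OF trig_laurent.cos]) (rule shifted_sin_has_derivative)
next
  case inverse_sin
  let ?s = "\<lambda>t. shifted_sin w t"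
  have "trig_laurent w (\<lambda>t. -1 * (shifted_cos w t * (1 / ?s t * (1 / ?s t))))"
    by (intro trig_laurent.intros)
  moreover have "((\<lambda>t. 1 / ?s t) has_real_derivative -1 * (shifted_cos w t * (1 / ?s t * (1 / ?s t)))) (at t)"
    if "?s t \<noteq> 0" for t
    using that by (auto intro!: derivative_eq_intros shifted_sin_has_derivative
        simp: field_simps power2_eq_square)
  ultimately show ?case
    by (rule inverse_sin.prems)
next
  case (add p q)
  obtain p' q' where "trig_laurent w p'" "trig_laurent w q'"
    "\<And>t. shifted_sin w t \<noteq> 0 \<Longrightarrow> (p has_real_derivative p' t) (at t)"
    "\<And>t. shifted_sin w t \<noteq> 0 \<Longrightarrow> (q has_real_derivative q' t) (at t)"
    using add.IH by metis
  then show ?case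
    by (intro add.prems[of "\<lambda>t. p' t + q' t"] trig_laurent.add) (auto intro: derivative_intros)
next
  case (mult p q)
  obtain p' q' where "trig_laurent w p'" "trig_laurent w q'"
    and p': "\<And>t. shifted_sin w t \<noteq> 0 \<Longrightarrow> (p has_real_derivative p' t) (at t)"
    and q': "\<And>t. shifted_sin w t \<noteq> 0 \<Longrightarrow> (q has_real_derivative q' t) (at t)"
    using mult.IH by metis
  show ?case
  proof (rule mult.prems)
    show "trig_laurent w (\<lambda>t. p' t * q t + p t * q' t)"
      by (intro trig_laurent.intros mult.hyps) fact+
    show "((\<lambda>t. p t * q t) has_real_derivative p' t * q t + p t * q' t) (at t)"
      if "shifted_sin w t \<noteq> 0" for t
      using DERIV_mult[OF p'[OF that] q'[OF that]] by (simp add: mult.commute)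
  qed
qed

lemma add_power_bound:
  fixes x :: real
  assumes "1 \<le> x" "0 \<le> A1" "0 \<le> A2"
  shows "A1 * x ^ N1 + A2 * x ^ N2 \<le> (A1 + A2) * x ^ (N1 + N2)"
proof -
  have "x ^ N1 \<le> x ^ (N1 + N2)" "x ^ N2 \<le> x ^ (N1 + N2)"
    using assms(1) by (simp_all add: power_increasing)
  then show ?thesis
    using assms(2,3) by (simp add: distrib_right add_mono mult_left_mono)
qed

lemma trig_laurent_bound:
  assumes "cmod w = 1" "trig_laurent w p"
  obtains A N where "0 \<le> A" "\<And>t. 0 < shifted_sin w t \<Longrightarrow> \<bar>p t\<bar> \<le> A * (1 / shifted_sin w t) ^ N"
  using assms(2)
proof (induction arbitrary: thesis)
  case (const a)
  show ?case
    by (rule const.prems[of "\<bar>a\<bar>" 0]) auto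
next
  case cos
  show ?case
    by (rule cos.prems[of 1 0]) (use abs_shifted_cos_le[OF assms(1)] in auto)
next
  case sin
  show ?case
    by (rule sin.prems[of 1 0]) (use abs_shifted_sin_le[OF assms(1)] in \<open>auto simp: abs_le_iff\<close>)
next
  case inverse_sin
  show ?case
    by (rule inverse_sin.prems[of 1 1]) simp_all
next
  case (add p q)
  obtain A1 N1 A2 N2 where "0 \<le> A1" "0 \<le> A2"
    and p: "\<And>t. 0 < shifted_sin w t \<Longrightarrow> \<bar>p t\<bar> \<le> A1 * (1 / shifted_sin w t) ^ N1"
    and q: "\<And>t. 0 < shifted_sin w t \<Longrightarrow> \<bar>q t\<bar> \<le> A2 * (1 / shifted_sin w t) ^ N2"
    using add.IH by metis
  show ?case
  proof (rule add.prems[of "A1 + A2" "N1 + N2"])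
    fix t assume t: "0 < shifted_sin w t"
    have "shifted_sin w t \<le> 1"
      using abs_shifted_sin_le[OF assms(1), of t] by simp
    then have "1 \<le> 1 / shifted_sin w t"
      using t by simp
    then show "\<bar>p t + q t\<bar> \<le> (A1 + A2) * (1 / shifted_sin w t) ^ (N1 + N2)"
      using abs_triangle_ineq[of "p t" "q t"] p[OF t] q[OF t]
        add_power_bound[OF _ \<open>0 \<le> A1\<close> \<open>0 \<le> A2\<close>, of _ N1 N2] by fastforce
  qed (use \<open>0 \<le> A1\<close> \<open>0 \<le> A2\<close> in simp)
next
  case (mult p q)
  obtain A1 N1 A2 N2 where "0 \<le> A1" "0 \<le> A2"
    and p: "\<And>t. 0 < shifted_sin w t \<Longrightarrow> \<bar>p t\<bar> \<le> A1 * (1 / shifted_sin w t) ^ N1"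
    and q: "\<And>t. 0 < shifted_sin w t \<Longrightarrow> \<bar>q t\<bar> \<le> A2 * (1 / shifted_sin w t) ^ N2"
    using mult.IH by metis
  show ?case
  proof (rule mult.prems[of "A1 * A2" "N1 + N2"])
    fix t assume t: "0 < shifted_sin w t"
    have "\<bar>p t * q t\<bar> \<le> (A1 * (1 / shifted_sin w t) ^ N1) * (A2 * (1 / shifted_sin w t) ^ N2)"
      unfolding abs_mult using p[OF t] q[OF t] by (intro mult_mono) auto
    then show "\<bar>p t * q t\<bar> \<le> A1 * A2 * (1 / shifted_sin w t) ^ (N1 + N2)"
      by (simp add: power_add mult_ac)
  qed (use \<open>0 \<le> A1\<close> \<open>0 \<le> A2\<close> in simp)
qed

definition flat_part :: "complex \<Rightarrow> (real \<Rightarrow> real) \<Rightarrow> real \<Rightarrow> real" where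
  "flat_part w p t = (if 0 < shifted_sin w t then p t * exp (- (1 / shifted_sin w t)) else 0)"

definition flat_weight :: "nat \<Rightarrow> real \<Rightarrow> real" where
  "flat_weight n s = (if 0 < s then (1 / s) ^ n * exp (- (1 / s)) else 0)"

lemma isCont_flat_weight_0: "isCont (flat_weight n) 0"
proof -
  have "((\<lambda>s::real. (1 / s) ^ n * exp (- (1 / s))) \<longlongrightarrow> 0) (at_right 0)"
    by real_asymp
  moreover have "\<forall>\<^sub>F s in at_right 0. (1 / s) ^ n * exp (- (1 / s)) = flat_weight n s"
    using eventually_at_right_less by (rule eventually_mono) (simp add: flat_weight_def)
  ultimately have "(flat_weight n \<longlongrightarrow> 0) (at_right 0)"
    by (rule Lim_transform_eventually)
  moreover have "\<forall>\<^sub>F s in at_left 0. flat_weight n s = 0"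
    by (auto simp: eventually_at_left_field flat_weight_def intro!: exI[of _ "-1"])
  then have "(flat_weight n \<longlongrightarrow> 0) (at_left 0)"
    by (rule tendsto_eventually)
  ultimately show ?thesis
    by (simp add: isCont_def filterlim_at_split flat_weight_def)
qed

lemma abs_flat_part_div_le:
  assumes w: "cmod w = 1" and "0 \<le> A"
    and A: "\<And>t. 0 < shifted_sin w t \<Longrightarrow> \<bar>p t\<bar> \<le> A * (1 / shifted_sin w t) ^ N"
    and t: "shifted_sin w t = 0"
  shows "\<bar>flat_part w p (t + h) / h\<bar> \<le> A * flat_weight (Suc N) (shifted_sin w (t + h))"
proof (cases "0 < shifted_sin w (t + h)")
  case False
  then show ?thesis
    by (simp add: flat_part_def flat_weight_def)
next
  case True
  define s where "s = shifted_sin w (t + h)"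
  have "0 < s"
    using True by (simp add: s_def)
  have "\<bar>s\<bar> = \<bar>sin h\<bar> * \<bar>shifted_cos w t\<bar>"
    unfolding s_def shifted_sin_add t by (simp add: abs_mult)
  also have "\<dots> \<le> \<bar>h\<bar>"
    using abs_shifted_cos_le[OF w, of t] abs_sin_x_le_abs_x[of h]
    by (metis abs_ge_zero mult_right_le_one_le order_trans)
  finally have "1 / \<bar>h\<bar> \<le> 1 / s"
    using \<open>0 < s\<close> by (simp add: divide_left_mono)
  moreover have "\<bar>p (t + h)\<bar> \<le> A * (1 / s) ^ N"
    using A[of "t + h"] True unfolding s_def by simp
  ultimately have "\<bar>p (t + h)\<bar> * exp (- (1 / s)) * (1 / \<bar>h\<bar>) \<le>
      A * (1 / s) ^ N * exp (- (1 / s)) * (1 / s)"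
    by (intro mult_mono) auto
  moreover have "\<bar>flat_part w p (t + h) / h\<bar> = \<bar>p (t + h)\<bar> * exp (- (1 / s)) * (1 / \<bar>h\<bar>)"
    using True by (simp add: flat_part_def s_def abs_mult divide_inverse)
  moreover have "A * flat_weight (Suc N) s = A * (1 / s) ^ N * exp (- (1 / s)) * (1 / s)"
    using \<open>0 < s\<close> by (simp add: flat_weight_def mult_ac)
  ultimately show ?thesis
    unfolding s_def[symmetric] by linarith
qed

lemma flat_part_has_derivative_0:
  assumes w: "cmod w = 1" and p: "trig_laurent w p" and t: "shifted_sin w t = 0"
  shows "(flat_part w p has_real_derivative 0) (at t)"
proof -
  obtain A N where "0 \<le> A" and A: "\<And>t. 0 < shifted_sin w t \<Longrightarrow> \<bar>p t\<bar> \<le> A * (1 / shifted_sin w t) ^ N"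
    using trig_laurent_bound[OF w p] by metis
  have "shifted_sin w \<midarrow>t\<rightarrow> shifted_sin w t"
    using DERIV_isCont[OF shifted_sin_has_derivative] by (simp add: isCont_def)
  from LIM_offset_zero[OF this] have "((\<lambda>h. shifted_sin w (t + h)) \<longlongrightarrow> 0) (at 0)"
    using t by simp
  from isCont_tendsto_compose[OF isCont_flat_weight_0 this]
  have "((\<lambda>h. flat_weight (Suc N) (shifted_sin w (t + h))) \<longlongrightarrow> 0) (at 0)"
    by (simp add: flat_weight_def)
  then have "((\<lambda>h. A * flat_weight (Suc N) (shifted_sin w (t + h))) \<longlongrightarrow> 0) (at 0)"
    using tendsto_mult[OF tendsto_const, of _ 0 _ A] by simp
  then have "((\<lambda>h. flat_part w p (t + h) / h) \<longlongrightarrow> 0) (at 0)"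
  proof (rule Lim_null_comparison[rotated], intro always_eventually allI)
    show "norm (flat_part w p (t + h) / h) \<le> A * flat_weight (Suc N) (shifted_sin w (t + h))" for h
      unfolding real_norm_def by (rule abs_flat_part_div_le[OF w \<open>0 \<le> A\<close> A t])
  qed
  then show ?thesis
    using t by (simp add: DERIV_def flat_part_def)
qed

lemma flat_part_has_derivative:
  assumes w: "cmod w = 1" and p: "trig_laurent w p"
  obtains q where "trig_laurent w q" "\<And>t. (flat_part w p has_real_derivative flat_part w q t) (at t)"
proof -
  let ?s = "\<lambda>t. shifted_sin w t"
  obtain p' where "trig_laurent w p'"
    and p': "\<And>t. ?s t \<noteq> 0 \<Longrightarrow> (p has_real_derivative p' t) (at t)"
    using trig_laurent_has_derivative[OF p] by metis
  define q where "q t = p' t + p t * (shifted_cos w t * (1 / ?s t * (1 / ?s t)))" for t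
  have "trig_laurent w q"
    unfolding q_def by (intro trig_laurent.intros \<open>trig_laurent w p'\<close> p)
  moreover have "(flat_part w p has_real_derivative flat_part w q t) (at t)" for t
  proof (cases "?s t" "0::real" rule: linorder_cases)
    case less
    have "((\<lambda>_. 0) has_real_derivative 0) (at t)"
      by simp
    then have "(flat_part w p has_real_derivative 0) (at t)"
    proof (rule has_field_derivative_transform_within_open)
      show "open {t. ?s t < 0}"
        using continuous_shifted_sin by (intro open_Collect_less) auto
    qed (use less in \<open>auto simp: flat_part_def\<close>)
    then show ?thesis
      using less by (simp add: flat_part_def)
  next
    case equal
    then show ?thesis
      using flat_part_has_derivative_0[OF w p equal] by (simp add: flat_part_def)
  next
    case greater
    have "((\<lambda>t. - (1 / ?s t)) has_real_derivative shifted_cos w t * (1 / ?s t * (1 / ?s t))) (at t)"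
      using greater by (auto intro!: derivative_eq_intros shifted_sin_has_derivative
          simp: field_simps power2_eq_square)
    from DERIV_mult[OF p' DERIV_fun_exp[OF this]] greater
    have "((\<lambda>t. p t * exp (- (1 / ?s t))) has_real_derivative flat_part w q t) (at t)"
      by (simp add: flat_part_def q_def algebra_simps)
    then show ?thesis
    proof (rule has_field_derivative_transform_within_open)
      show "open {t. 0 < ?s t}"
        using continuous_shifted_sin by (intro open_Collect_less) auto
    qed (use greater in \<open>auto simp: flat_part_def\<close>)
  qed
  ultimately show thesis
    using that by blast
qed

lemma iter_deriv_flat_part:
  assumes w: "cmod w = 1" and p: "trig_laurent w p"
  obtains q where "trig_laurent w q"
    "iter_deriv l (\<lambda>t. of_real (flat_part w p t)) = (\<lambda>t. of_real (flat_part w q t))"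
proof (induction l arbitrary: thesis)
  case 0
  then show ?case
    using p by simp
next
  case (Suc l)
  obtain q where "trig_laurent w q"
    and q: "iter_deriv l (\<lambda>t. of_real (flat_part w p t)) = (\<lambda>t. of_real (flat_part w q t))"
    using Suc.IH by metis
  obtain q' where "trig_laurent w q'"
    and q': "\<And>t. (flat_part w q has_real_derivative flat_part w q' t) (at t)"
    using flat_part_has_derivative[OF w \<open>trig_laurent w q\<close>] by metis
  have deriv: "((\<lambda>t. complex_of_real (flat_part w q t)) has_vector_derivative
      of_real (flat_part w q' t)) (at t)" for t
    by (rule has_vector_derivative_of_real[OF q'])
  show ?case
    by (intro Suc.prems[OF \<open>trig_laurent w q'\<close>]) (simp add: q vector_derivative_at[OF deriv])
qed

lemma Ck_real_flat_part:
  assumes "cmod w = 1" "trig_laurent w p"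
  shows "Ck_real k (\<lambda>t. of_real (flat_part w p t))"
  unfolding Ck_real_def
proof (intro conjI allI impI)
  fix l
  obtain q where q: "trig_laurent w q"
    and eq: "iter_deriv l (\<lambda>t. of_real (flat_part w p t)) = (\<lambda>t. of_real (flat_part w q t))"
    using iter_deriv_flat_part[OF assms] by metis
  obtain q' where "\<And>t. (flat_part w q has_real_derivative flat_part w q' t) (at t)"
    using flat_part_has_derivative[OF assms(1) q] by metis
  then have deriv: "((\<lambda>t. complex_of_real (flat_part w q t)) has_vector_derivative of_real (flat_part w q' t)) (at t)" for t
    by (rule has_vector_derivative_of_real)
  show "iter_deriv l (\<lambda>t. of_real (flat_part w p t)) differentiable (at t)" for t
    unfolding eq using deriv by (auto simp: vector_derivative_works[symmetric] differentiable_def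
        has_vector_derivative_def)
  show "continuous_on UNIV (iter_deriv l (\<lambda>t. of_real (flat_part w p t)))"
    unfolding eq using deriv
    by (intro continuous_at_imp_continuous_on ballI has_vector_derivative_continuous) auto
qed

text \<open>
  For \<open>cmod z0 = 1\<close>, \<open>Im (z * cnj z0)\<close> is the sine of the angle from \<open>z0\<close> to \<open>z\<close>; off the circle
  the function is \<open>0\<close>, as the encoding of \<open>C\<^sup>k(T)\<close> requires.
\<close>

definition flat_bump :: "complex \<Rightarrow> complex \<Rightarrow> complex" where
  "flat_bump z0 z = (if z \<in> sphere 0 1 \<and> 0 < Im (z * cnj z0)
     then of_real (exp (- (1 / Im (z * cnj z0)))) else 0)"

lemma flat_bump_Ck_T:
  assumes "cmod z0 = 1"
  shows "flat_bump z0 \<in> Ck_T k"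
proof -
  have "circ_param (flat_bump z0) = (\<lambda>t. of_real (flat_part (cnj z0) (\<lambda>t. 1) t))"
    by (auto simp: circ_param_def flat_bump_def flat_part_def shifted_sin_def)
  moreover have "Ck_real k (\<lambda>t. of_real (flat_part (cnj z0) (\<lambda>t. 1) t))"
    using assms by (intro Ck_real_flat_part trig_laurent.const) simp
  ultimately show ?thesis
    by (simp add: Ck_T_def flat_bump_def)
qed

section \<open>Holomorphically extendable functions\<close>

definition holomorphic_extendable :: "complex \<Rightarrow> (complex \<Rightarrow> complex) \<Rightarrow> bool" where
  "holomorphic_extendable z0 u \<longleftrightarrow> (\<exists>r>0. \<exists>h. continuous_on (sphere 0 1 \<union> P_set z0 r) h \<and>
     h holomorphic_on P_set z0 r \<and> (\<forall>z \<in> ball z0 r \<inter> sphere 0 1. h z = u z))"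

lemma U3_eq_not_extendable: "U3 z0 k = {u \<in> Ck_T k. \<not> holomorphic_extendable z0 u}"
  by (simp add: U3_def holomorphic_extendable_def)

lemma holomorphic_extendable_lincomb:
  assumes "holomorphic_extendable z0 u" "holomorphic_extendable z0 v"
  shows "holomorphic_extendable z0 (\<lambda>z. a * u z + b * v z)"
proof -
  obtain r1 h1 where "0 < r1" and h1: "continuous_on (sphere 0 1 \<union> P_set z0 r1) h1"
    "h1 holomorphic_on P_set z0 r1" "\<forall>z \<in> ball z0 r1 \<inter> sphere 0 1. h1 z = u z"
    using assms(1) unfolding holomorphic_extendable_def by blast
  obtain r2 h2 where "0 < r2" and h2: "continuous_on (sphere 0 1 \<union> P_set z0 r2) h2"
    "h2 holomorphic_on P_set z0 r2" "\<forall>z \<in> ball z0 r2 \<inter> sphere 0 1. h2 z = v z"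
    using assms(2) unfolding holomorphic_extendable_def by blast
  define r where "r = min r1 r2"
  have "0 < r" "P_set z0 r \<subseteq> P_set z0 r1" "P_set z0 r \<subseteq> P_set z0 r2"
    using \<open>0 < r1\<close> \<open>0 < r2\<close> by (auto simp: r_def P_set_def)
  then have "continuous_on (sphere 0 1 \<union> P_set z0 r) (\<lambda>z. a * h1 z + b * h2 z)"
    "(\<lambda>z. a * h1 z + b * h2 z) holomorphic_on P_set z0 r"
    using h1 h2 by (auto intro!: continuous_intros holomorphic_intros
        intro: continuous_on_subset holomorphic_on_subset)
  moreover have "\<forall>z \<in> ball z0 r \<inter> sphere 0 1. a * h1 z + b * h2 z = a * u z + b * v z"
    using h1(3) h2(3) by (simp add: r_def)
  ultimately show ?thesis
    unfolding holomorphic_extendable_def using \<open>0 < r\<close> by blast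
qed

lemma holomorphic_extendableI:
  assumes z0: "cmod z0 = 1" and "0 < r"
    and cont: "continuous_on (closure (P_set z0 r)) H" and hol: "H holomorphic_on P_set z0 r"
    and eq: "\<And>z. z \<in> closure (P_set z0 r) \<inter> sphere 0 1 \<Longrightarrow> H z = u z"
    and u: "continuous_on (sphere 0 1) u"
  shows "holomorphic_extendable z0 u"
  unfolding holomorphic_extendable_def
proof (intro exI conjI ballI)
  let ?h = "\<lambda>z. if z \<in> closure (P_set z0 r) then H z else u z"
  have "continuous_on (closure (P_set z0 r) \<union> sphere 0 1) ?h"
    using cont u eq by (intro continuous_on_cases) auto
  then show "continuous_on (sphere 0 1 \<union> P_set z0 r) ?h"
    by (rule continuous_on_subset) (use closure_subset in blast)
  show "?h holomorphic_on P_set z0 r"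
    using hol by (rule holomorphic_transform) (use closure_subset in auto)
  show "?h z = u z" if "z \<in> ball z0 r \<inter> sphere 0 1" for z
    using eq that by auto
qed (fact \<open>0 < r\<close>)

lemma norm_cis_minus_1_le: "cmod (cis a - 1) \<le> \<bar>a\<bar>"
proof -
  have "cmod (cis a - 1) = 2 * \<bar>sin (a / 2)\<bar>"
    using dist_exp_i_1[of a] by (simp add: cis_conv_exp mult.commute)
  also have "\<dots> \<le> \<bar>a\<bar>"
    using abs_sin_x_le_abs_x[of "a / 2"] by simp
  finally show ?thesis .
qed

lemma unit_mult_cis:
  assumes "cmod z0 = 1"
  shows "cmod (z0 * cis b) = 1" "dist z0 (z0 * cis b) \<le> \<bar>b\<bar>" "Im (z0 * cis b * cnj z0) = sin b"
proof -
  show "cmod (z0 * cis b) = 1"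
    using assms by (simp add: norm_mult)
  have "z0 - z0 * cis b = z0 * (1 - cis b)"
    by (simp add: algebra_simps)
  then have "dist z0 (z0 * cis b) = cmod (cis b - 1)"
    using assms by (simp add: dist_norm norm_mult norm_minus_commute)
  then show "dist z0 (z0 * cis b) \<le> \<bar>b\<bar>"
    using norm_cis_minus_1_le[of b] by simp
  have "z0 * cis b * cnj z0 = cis b * (z0 * cnj z0)"
    by (simp only: mult_ac)
  also have "\<dots> = cis b"
    by (simp only: mult_cnj_unit[OF assms] mult_1_right)
  finally show "Im (z0 * cis b * cnj z0) = sin b"
    by (simp only: cis.sel)
qed

lemma Im_mult_cnj_neg_near:
  assumes "cmod z0 = 1" "dist (z0 * cis (- a)) w \<le> \<rho>" "\<rho> < sin a"
  shows "Im (w * cnj z0) < 0"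
proof -
  have "Im (w * cnj z0) \<le> Im (z0 * cis (- a) * cnj z0) + cmod ((w - z0 * cis (- a)) * cnj z0)"
    using abs_Im_le_cmod[of "(w - z0 * cis (- a)) * cnj z0"] by (simp add: algebra_simps)
  also have "\<dots> \<le> - sin a + \<rho>"
    using assms(1,2) unit_mult_cis(3)[OF assms(1), of "- a"]
    by (simp add: norm_mult dist_norm norm_minus_commute)
  finally show ?thesis
    using assms(3) by linarith
qed

lemma extension_zero_if_zero_on_subarc:
  fixes h :: "complex \<Rightarrow> complex"
  assumes z0: "cmod z0 = 1"
    and cont: "continuous_on (sphere 0 1 \<union> P_set z0 r) h" and hol: "h holomorphic_on P_set z0 r"
    and c: "cmod c = 1" and \<rho>: "0 < \<rho>" "\<rho> \<le> 1" and sub: "cball c \<rho> \<subseteq> ball z0 r"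
    and zero: "\<And>w. w \<in> cball c \<rho> \<inter> sphere 0 1 \<Longrightarrow> h w = 0"
    and z: "z \<in> P_set z0 r"
  shows "h z = 0"
proof -
  have closure_sub: "closure (P_set c \<rho>) \<subseteq> sphere 0 1 \<union> P_set z0 r"
    by (rule closure_P_set_subset[OF c \<rho>(1) sub])
  have "0 < \<rho>\<^sup>2 / 4" "\<rho>\<^sup>2 / 4 \<le> \<rho>"
    using \<rho> by (auto simp: power2_eq_square mult_left_le)
  have sub_P: "P_set c (\<rho>\<^sup>2 / 4) \<subseteq> P_set z0 r"
    using sub \<open>\<rho>\<^sup>2 / 4 \<le> \<rho>\<close> unfolding P_set_def by auto
  have zero_near: "h w = 0" if "w \<in> P_set c (\<rho>\<^sup>2 / 4)" for w
  proof (rule holomorphic_vanishing_on_arc[OF c \<rho>, where g = h and z = w])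
    show "continuous_on (closure (P_set c \<rho>)) h"
      using cont closure_sub by (rule continuous_on_subset)
    show "h holomorphic_on P_set c \<rho>"
      using hol by (rule holomorphic_on_subset) (use sub in \<open>auto simp: P_set_def\<close>)
    show "h w = 0" if "w \<in> closure (P_set c \<rho>) \<inter> sphere 0 1" for w
      using that zero unfolding closure_P_set[OF c \<rho>(1)] by simp
    show "w \<in> closure (P_set c (\<rho>\<^sup>2 / 4))"
      using that closure_subset by blast
  qed
  have "c * of_real (1 - \<rho>\<^sup>2 / 8) \<in> P_set c (\<rho>\<^sup>2 / 4)"
    using \<rho> c power_le_one[of \<rho> 2] by (intro radial_point_in_P_set) auto
  then show ?thesis
    using analytic_continuation_open[OF open_P_set open_P_set _ connected_P_set sub_P hol, of "\<lambda>_. 0"]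
      zero_near z by auto
qed

lemma extension_zero_on_boundary:
  fixes h :: "complex \<Rightarrow> complex"
  assumes z0: "cmod z0 = 1"
    and cont: "continuous_on (sphere 0 1 \<union> P_set z0 r) h"
    and zero: "\<And>w. w \<in> P_set z0 r \<Longrightarrow> h w = 0"
    and z: "z \<in> ball z0 r \<inter> sphere 0 1"
  shows "h z = 0"
proof -
  define r' where "r' = (dist z0 z + r) / 2"
  have "dist z0 z < r'" "r' < r"
    using z by (auto simp: r'_def)
  then have "0 < r'"
    using zero_le_dist[of z0 z] by linarith
  have closure_sub: "closure (P_set z0 r') \<subseteq> sphere 0 1 \<union> P_set z0 r"
    using \<open>r' < r\<close> by (intro closure_P_set_subset[OF z0 \<open>0 < r'\<close>]) auto
  show ?thesis
  proof (rule continuous_constant_on_closure[where S = "P_set z0 r'" and f = h and x = z])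
    show "continuous_on (closure (P_set z0 r')) h"
      using cont closure_sub by (rule continuous_on_subset)
    show "h w = 0" if "w \<in> P_set z0 r'" for w
      using that zero P_set_mono[of r' r z0] \<open>r' < r\<close> by auto
    show "z \<in> closure (P_set z0 r')"
      unfolding closure_P_set[OF z0 \<open>0 < r'\<close>] using \<open>dist z0 z < r'\<close> z by simp
  qed
qed

lemma flat_bump_not_extendable:
  assumes z0: "cmod z0 = 1"
  shows "\<not> holomorphic_extendable z0 (flat_bump z0)"
proof
  assume "holomorphic_extendable z0 (flat_bump z0)"
  then obtain r h where "0 < r" and cont: "continuous_on (sphere 0 1 \<union> P_set z0 r) h"
    and hol: "h holomorphic_on P_set z0 r"
    and eq: "\<And>z. z \<in> ball z0 r \<inter> sphere 0 1 \<Longrightarrow> h z = flat_bump z0 z"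
    unfolding holomorphic_extendable_def by blast
  define a where "a = min 1 (r / 4)"
  have a: "0 < a" "a \<le> 1" "a \<le> r / 4"
    using \<open>0 < r\<close> by (auto simp: a_def)
  then have "0 < sin a"
    using pi_gt3 by (intro sin_gt_zero) auto
  txt \<open>\<open>flat_bump z0\<close> vanishes on the arc around \<open>c\<close> and is positive at \<open>z0 * cis a\<close>.\<close>
  define c where "c = z0 * cis (- a)"
  define \<rho> where "\<rho> = min (r / 4) (sin a / 2)"
  have c: "cmod c = 1"
    unfolding c_def by (rule unit_mult_cis(1)[OF z0])
  have \<rho>: "0 < \<rho>" "\<rho> \<le> 1" "\<rho> \<le> r / 4" "\<rho> < sin a"
    using \<open>0 < r\<close> \<open>0 < sin a\<close> sin_le_one[of a] unfolding \<rho>_def by linarith+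
  have sub: "cball c \<rho> \<subseteq> ball z0 r"
  proof
    fix w assume "w \<in> cball c \<rho>"
    then have "dist z0 w \<le> a + \<rho>"
      using unit_mult_cis(2)[OF z0, of "- a"] dist_triangle[of z0 w c] \<open>0 < a\<close> unfolding c_def by simp
    then show "w \<in> ball z0 r"
      using a \<rho> \<open>0 < r\<close> by simp
  qed
  have zero_arc: "h w = 0" if "w \<in> cball c \<rho> \<inter> sphere 0 1" for w
  proof -
    have "Im (w * cnj z0) < 0"
      using Im_mult_cnj_neg_near[OF z0 _ \<rho>(4)] that unfolding c_def by simp
    then show "h w = 0"
      using eq[of w] that sub by (auto simp: flat_bump_def)
  qed
  have zero_P: "h w = 0" if "w \<in> P_set z0 r" for w
    by (rule extension_zero_if_zero_on_subarc[OF z0 cont hol c \<rho>(1,2) sub zero_arc that])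
  have "z0 * cis a \<in> ball z0 r \<inter> sphere 0 1"
    using unit_mult_cis(1,2)[OF z0, of a] a \<open>0 < r\<close> by simp
  then have "h (z0 * cis a) = 0"
    using extension_zero_on_boundary[OF z0 cont zero_P] by blast
  moreover have "flat_bump z0 (z0 * cis a) \<noteq> 0"
    using unit_mult_cis(1,3)[OF z0, of a] \<open>0 < sin a\<close> by (simp add: flat_bump_def)
  ultimately show False
    using eq \<open>z0 * cis a \<in> ball z0 r \<inter> sphere 0 1\<close> by simp
qed

lemma Ck_topology_small_perturbation:
  assumes "openin (Ck_topology k) T" "u \<in> T" "f \<in> Ck_T k"
  obtains t :: real where "0 < t" "(\<lambda>z. u z + of_real t * f z) \<in> T"
proof -
  obtain \<epsilon> L where "0 < \<epsilon>" and nbhd: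
    "\<And>v. v \<in> Ck_T k \<Longrightarrow> (\<And>l. l \<le> L \<Longrightarrow> enat l \<le> k \<Longrightarrow> seminorm_T l (v - u) < \<epsilon>) \<Longrightarrow> v \<in> T"
    by (rule Ck_topology_neighbourhood[OF assms(1,2)]) blast
  have u: "u \<in> Ck_T k"
    using assms(1,2) openin_subset topspace_Ck_topology by blast
  define S where "S = (\<Sum>l\<le>L. \<bar>seminorm_T l f\<bar>) + 1"
  have "0 < S"
    unfolding S_def by (simp add: add_nonneg_pos sum_nonneg)
  define t where "t = \<epsilon> / (2 * S)"
  have "0 < t"
    unfolding t_def using \<open>0 < \<epsilon>\<close> \<open>0 < S\<close> by simp
  moreover have "(\<lambda>z. u z + of_real t * f z) \<in> T"
  proof (rule nbhd)
    show "(\<lambda>z. u z + of_real t * f z) \<in> Ck_T k"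
      using u assms(3) by (rule Ck_T_add_scaled)
    fix l assume "l \<le> L" "enat l \<le> k"
    have "(\<lambda>z. u z + of_real t * f z) - u = (\<lambda>z. of_real t * f z)"
      by auto
    then have "seminorm_T l ((\<lambda>z. u z + of_real t * f z) - u) \<le> t * seminorm_T l f"
      using seminorm_T_scaled_le[OF assms(3) \<open>enat l \<le> k\<close>, of "of_real t"] \<open>0 < t\<close> by simp
    also have "\<dots> \<le> t * S"
    proof -
      have "\<bar>seminorm_T l f\<bar> \<le> (\<Sum>l\<le>L. \<bar>seminorm_T l f\<bar>)"
        using \<open>l \<le> L\<close> by (intro member_le_sum) auto
      then have "seminorm_T l f \<le> S"
        unfolding S_def by linarith
      then show ?thesis
        using \<open>0 < t\<close> by simp
    qed
    also have "\<dots> < \<epsilon>"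
      unfolding t_def using \<open>0 < \<epsilon>\<close> \<open>0 < S\<close> by simp
    finally show "seminorm_T l ((\<lambda>z. u z + of_real t * f z) - u) < \<epsilon>" .
  qed
  ultimately show thesis
    using that by blast
qed

lemma add_flat_bump_in_U3:
  assumes z0: "cmod z0 = 1" and u: "u \<in> Ck_T k" "u \<notin> U3 z0 k" and "c \<noteq> 0"
  shows "(\<lambda>z. u z + c * flat_bump z0 z) \<in> U3 z0 k"
proof (rule ccontr)
  let ?v = "\<lambda>z. u z + c * flat_bump z0 z"
  assume "?v \<notin> U3 z0 k"
  moreover have "?v \<in> Ck_T k"
    using u(1) flat_bump_Ck_T[OF z0] by (rule Ck_T_add_scaled)
  ultimately have "holomorphic_extendable z0 (\<lambda>z. inverse c * ?v z + (- inverse c) * u z)"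
    using u by (intro holomorphic_extendable_lincomb) (auto simp: U3_eq_not_extendable)
  moreover have "(\<lambda>z. inverse c * ?v z + (- inverse c) * u z) = flat_bump z0"
    using \<open>c \<noteq> 0\<close> by (auto simp: field_simps)
  ultimately show False
    using flat_bump_not_extendable[OF z0] by simp
qed

lemma U3_dense:
  assumes z0: "cmod z0 = 1"
  shows "Ck_topology k closure_of U3 z0 k = topspace (Ck_topology k)"
proof (intro antisym closure_of_subset_topspace subsetI)
  fix u assume "u \<in> topspace (Ck_topology k)"
  then have u: "u \<in> Ck_T k"
    by (simp add: topspace_Ck_topology)
  show "u \<in> Ck_topology k closure_of U3 z0 k"
    unfolding in_closure_of
  proof (intro conjI allI impI)
    fix T assume T: "u \<in> T \<and> openin (Ck_topology k) T"
    show "\<exists>y. y \<in> U3 z0 k \<and> y \<in> T"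
    proof (cases "u \<in> U3 z0 k")
      case True
      then show ?thesis
        using T by blast
    next
      case False
      obtain t :: real where "0 < t" and t: "(\<lambda>z. u z + of_real t * flat_bump z0 z) \<in> T"
        using Ck_topology_small_perturbation[OF conjunct2[OF T] conjunct1[OF T] flat_bump_Ck_T[OF z0]] .
      have "(\<lambda>z. u z + of_real t * flat_bump z0 z) \<in> U3 z0 k"
        using \<open>0 < t\<close> by (intro add_flat_bump_in_U3[OF z0 u False]) simp
      with t show ?thesis
        by blast
    qed
  qed (use u in \<open>simp add: topspace_Ck_topology\<close>)
qed

definition bounded_extendable :: "complex \<Rightarrow> enat \<Rightarrow> nat \<Rightarrow> (complex \<Rightarrow> complex) set" where
  "bounded_extendable z0 k n = {u \<in> Ck_T k. \<exists>h.
     continuous_on (sphere 0 1 \<union> P_set z0 (1 / Suc n)) h \<and> h holomorphic_on P_set z0 (1 / Suc n) \<and>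
     (\<forall>z \<in> ball z0 (1 / Suc n) \<inter> sphere 0 1. h z = u z) \<and>
     (\<forall>z \<in> ball z0 (1 / Suc n) \<inter> cball 0 1. cmod (h z) \<le> Suc n)}"

lemma extendable_imp_bounded_extendable:
  assumes z0: "cmod z0 = 1" and u: "u \<in> Ck_T k" "holomorphic_extendable z0 u"
  obtains n where "u \<in> bounded_extendable z0 k n"
proof -
  obtain r h where "0 < r" and cont: "continuous_on (sphere 0 1 \<union> P_set z0 r) h"
    and hol: "h holomorphic_on P_set z0 r" and eq: "\<forall>z \<in> ball z0 r \<inter> sphere 0 1. h z = u z"
    using u(2) unfolding holomorphic_extendable_def by blast
  have "0 < r / 2"
    using \<open>0 < r\<close> by simp
  have closure_sub: "closure (P_set z0 (r / 2)) \<subseteq> sphere 0 1 \<union> P_set z0 r"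
    using \<open>0 < r\<close> by (intro closure_P_set_subset[OF z0 \<open>0 < r / 2\<close>]) auto
  have "compact (closure (P_set z0 (r / 2)))"
    unfolding closure_P_set[OF z0 \<open>0 < r / 2\<close>] by (intro compact_Int_closed) auto
  moreover have "continuous_on (closure (P_set z0 (r / 2))) h"
    using cont closure_sub by (rule continuous_on_subset)
  ultimately have "bounded (h ` closure (P_set z0 (r / 2)))"
    by (intro compact_imp_bounded compact_continuous_image)
  then obtain B where B: "\<And>w. w \<in> closure (P_set z0 (r / 2)) \<Longrightarrow> cmod (h w) \<le> B"
    by (auto simp: bounded_iff)
  define n where "n = nat \<lceil>max (2 / r) B\<rceil>"
  have "2 / r \<le> Suc n" "B \<le> Suc n"
    unfolding n_def by linarith+
  then have "1 / Suc n \<le> r / 2"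
    using \<open>0 < r\<close> by (simp add: field_simps)
  then have R: "1 / Suc n \<le> r" "P_set z0 (1 / Suc n) \<subseteq> P_set z0 r"
    using \<open>0 < r\<close> P_set_mono[of "1 / Suc n" r z0] by simp_all
  have "u \<in> bounded_extendable z0 k n"
    unfolding bounded_extendable_def
  proof (intro CollectI conjI exI ballI)
    show "continuous_on (sphere 0 1 \<union> P_set z0 (1 / Suc n)) h"
      by (rule continuous_on_subset[OF cont]) (use R(2) in blast)
    show "h holomorphic_on P_set z0 (1 / Suc n)"
      using hol R(2) by (rule holomorphic_on_subset)
    show "h z = u z" if "z \<in> ball z0 (1 / Suc n) \<inter> sphere 0 1" for z
      using eq that R(1) by auto
    show "cmod (h z) \<le> Suc n" if "z \<in> ball z0 (1 / Suc n) \<inter> cball 0 1" for z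
    proof -
      have "z \<in> closure (P_set z0 (r / 2))"
        unfolding closure_P_set[OF z0 \<open>0 < r / 2\<close>] using that \<open>1 / Suc n \<le> r / 2\<close> by auto
      then show ?thesis
        using B[of z] \<open>B \<le> Suc n\<close> by linarith
    qed
  qed (fact u(1))
  then show thesis
    by (rule that)
qed

lemma closure_of_Ck_topology_uniform_limit:
  assumes "u \<in> Ck_topology k closure_of S"
  obtains v where "\<And>j. v j \<in> S" "uniform_limit (sphere 0 1) v u sequentially"
proof -
  have u: "u \<in> Ck_T k"
    using assms by (simp add: in_closure_of topspace_Ck_topology)
  have near: "\<And>T. u \<in> T \<Longrightarrow> openin (Ck_topology k) T \<Longrightarrow> \<exists>y. y \<in> S \<and> y \<in> T"
    using assms unfolding in_closure_of by blast
  have "\<forall>j. \<exists>v. v \<in> S \<and> v \<in> Ck_T k \<and> seminorm_T 0 (v - u) < 1 / Suc j"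
  proof
    fix j
    have "u \<in> {v \<in> Ck_T k. seminorm_T 0 (v - u) < 1 / Suc j}"
      using u by (simp add: fun_diff_def)
    moreover have "openin (Ck_topology k) {v \<in> Ck_T k. seminorm_T 0 (v - u) < 1 / Suc j}"
      using u by (intro openin_Ck_seminorm_ball) (simp_all flip: zero_enat_def)
    ultimately obtain y where "y \<in> S" "y \<in> {v \<in> Ck_T k. seminorm_T 0 (v - u) < 1 / Suc j}"
      by (rule near[THEN exE]) blast
    then show "\<exists>v. v \<in> S \<and> v \<in> Ck_T k \<and> seminorm_T 0 (v - u) < 1 / Suc j"
      by blast
  qed
  from choice[OF this] obtain v where v: "\<And>j. v j \<in> S" "\<And>j. v j \<in> Ck_T k"
    "\<And>j. seminorm_T 0 (v j - u) < 1 / Suc j"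
    by blast
  show thesis
  proof (rule that[OF v(1) uniform_limitI])
    fix \<epsilon> :: real assume "0 < \<epsilon>"
    then obtain N where "1 / Suc N < \<epsilon>"
      by (rule nat_approx_posE)
    show "\<forall>\<^sub>F j in sequentially. \<forall>z\<in>sphere 0 1. dist (v j z) (u z) < \<epsilon>"
      unfolding eventually_sequentially
    proof (intro exI allI impI ballI)
      fix j and z :: complex assume "N \<le> j" "z \<in> sphere 0 1"
      have "dist (v j z) (u z) \<le> seminorm_T 0 (v j - u)"
        using norm_diff_le_seminorm_T_0[OF v(2) u \<open>z \<in> sphere 0 1\<close>] by (simp add: dist_norm)
      also have "\<dots> < 1 / Suc j"
        by (rule v(3))
      also have "\<dots> \<le> 1 / Suc N"
        using \<open>N \<le> j\<close> by (simp add: frac_le)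
      finally show "dist (v j z) (u z) < \<epsilon>"
        using \<open>1 / Suc N < \<epsilon>\<close> by linarith
    qed
  qed
qed

lemma closure_of_bounded_extendable_imp_extendable:
  assumes z0: "cmod z0 = 1" and u: "u \<in> Ck_topology k closure_of bounded_extendable z0 k n"
  shows "holomorphic_extendable z0 u"
proof -
  define R where "R = 1 / real (Suc n)"
  define \<rho> where "\<rho> = R / 2"
  have "0 < R" "R \<le> 1"
    by (simp_all add: R_def)
  then have \<rho>: "0 < \<rho>" "\<rho> \<le> 1" "\<rho> < R"
    by (simp_all add: \<rho>_def)
  obtain v where v: "\<And>j. v j \<in> bounded_extendable z0 k n"
    and lim: "uniform_limit (sphere 0 1) v u sequentially"
    using closure_of_Ck_topology_uniform_limit[OF u] by blast
  have "\<forall>j. \<exists>h. continuous_on (sphere 0 1 \<union> P_set z0 R) h \<and> h holomorphic_on P_set z0 R \<and>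
      (\<forall>z \<in> ball z0 R \<inter> sphere 0 1. h z = v j z) \<and> (\<forall>z \<in> ball z0 R \<inter> cball 0 1. cmod (h z) \<le> Suc n)"
    using v unfolding bounded_extendable_def R_def by blast
  then obtain h where cont: "\<And>j. continuous_on (sphere 0 1 \<union> P_set z0 R) (h j)"
    and hol: "\<And>j. h j holomorphic_on P_set z0 R"
    and eq: "\<And>j z. z \<in> ball z0 R \<inter> sphere 0 1 \<Longrightarrow> h j z = v j z"
    and bound: "\<And>j z. z \<in> ball z0 R \<inter> cball 0 1 \<Longrightarrow> cmod (h j z) \<le> Suc n"
    by metis
  have lens: "closure (P_set z0 \<rho>) = cball z0 \<rho> \<inter> cball 0 1"
    by (rule closure_P_set[OF z0 \<rho>(1)])
  have cont_\<rho>: "continuous_on (closure (P_set z0 \<rho>)) (h j)" for j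
    by (rule continuous_on_subset[OF cont closure_P_set_subset[OF z0 \<rho>(1)]]) (use \<rho> in auto)
  have hol_\<rho>: "h j holomorphic_on P_set z0 \<rho>" for j
    by (rule holomorphic_on_subset[OF hol]) (use \<rho> in \<open>auto simp: P_set_def\<close>)
  have bound_\<rho>: "cmod (h j w) \<le> Suc n" if "w \<in> closure (P_set z0 \<rho>)" for j w
    using bound that \<rho> by (auto simp: lens)
  have "v j z = h j z" if "z \<in> closure (P_set z0 \<rho>) \<inter> sphere 0 1" for j z
    using eq that \<rho> by (auto simp: lens)
  moreover have "uniform_limit (closure (P_set z0 \<rho>) \<inter> sphere 0 1) v u sequentially"
    by (rule uniform_limit_on_subset[OF lim]) blast
  ultimately have lim_\<rho>: "uniform_limit (closure (P_set z0 \<rho>) \<inter> sphere 0 1) h u sequentially"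
    using uniform_limit_cong'[of "closure (P_set z0 \<rho>) \<inter> sphere 0 1" v h u u] by simp
  obtain H where H: "continuous_on (closure (P_set z0 (\<rho>\<^sup>2 / 4))) H"
    "H holomorphic_on P_set z0 (\<rho>\<^sup>2 / 4)"
    "\<And>z. z \<in> closure (P_set z0 (\<rho>\<^sup>2 / 4)) \<inter> sphere 0 1 \<Longrightarrow> H z = u z"
    using uniform_limit_on_arc_extends[OF z0 \<rho>(1,2) cont_\<rho> hol_\<rho> bound_\<rho> lim_\<rho>] by blast
  have "0 < \<rho>\<^sup>2 / 4"
    using \<rho> by simp
  moreover have "continuous_on (sphere 0 1) u"
    using u by (intro continuous_on_sphere_Ck_T[of u k]) (simp add: in_closure_of topspace_Ck_topology)
  ultimately show ?thesis
    using H by (intro holomorphic_extendableI[OF z0, where H = H]) auto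
qed

lemma U3_eq_Inter:
  assumes z0: "cmod z0 = 1"
  shows "U3 z0 k = (\<Inter>n. topspace (Ck_topology k) - Ck_topology k closure_of bounded_extendable z0 k n)"
proof (intro equalityI subsetI)
  fix u assume "u \<in> U3 z0 k"
  then show "u \<in> (\<Inter>n. topspace (Ck_topology k) - Ck_topology k closure_of bounded_extendable z0 k n)"
    using closure_of_bounded_extendable_imp_extendable[OF z0]
    by (auto simp: U3_eq_not_extendable topspace_Ck_topology)
next
  fix u assume u: "u \<in> (\<Inter>n. topspace (Ck_topology k) - Ck_topology k closure_of bounded_extendable z0 k n)"
  then have "u \<in> Ck_T k"
    by (simp add: topspace_Ck_topology)
  moreover have "\<not> holomorphic_extendable z0 u"
  proof
    assume "holomorphic_extendable z0 u"
    then obtain n where "u \<in> bounded_extendable z0 k n"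
      using extendable_imp_bounded_extendable[OF z0 \<open>u \<in> Ck_T k\<close>] by blast
    moreover have "bounded_extendable z0 k n \<subseteq> topspace (Ck_topology k)"
      by (auto simp: bounded_extendable_def topspace_Ck_topology)
    ultimately show False
      using u closure_of_subset by blast
  qed
  ultimately show "u \<in> U3 z0 k"
    by (simp add: U3_eq_not_extendable)
qed

theorem theorem3p14:
  fixes z0 :: complex and k :: enat
  assumes "z0 \<in> sphere 0 1"
  shows "gdelta_in (Ck_topology k) (U3 z0 k) \<and>
         (Ck_topology k) closure_of (U3 z0 k) = topspace (Ck_topology k)"
proof
  have z0: "cmod z0 = 1"
    using assms by simp
  show "gdelta_in (Ck_topology k) (U3 z0 k)"
    unfolding U3_eq_Inter[OF z0]
    by (intro gdelta_in_Inter open_imp_gdelta_in openin_diff) auto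
  show "Ck_topology k closure_of U3 z0 k = topspace (Ck_topology k)"
    by (rule U3_dense[OF z0])
qed

end
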